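(* Let $q$ be a prime power, $1\le\ell\le m$, $k=\binom{m}{\ell}$, and $n=\left[{m\atop \ell}\right]_q$. Then $d_s(C(\ell,m))=n-g_s(\ell,m)$ for $s=1,\dots,k$.
   Context: Let $V=\mathbb F_q^m$ with fixed basis $e_1,\dots,e_m$; identify $\bigwedge^mV$ with $\mathbb F_q$ via $e_1\wedge\cdots\wedge e_m=1$. Fix representatives $\omega'_1,\dots,\omega'_n\in\bigwedge^{\ell}V$, $\omega'_i=v_1\wedge\cdots\wedge v_\ell$ for a basis of the $i$-th $\ell$-dimensional subspace of $V$ (one for each such subspace), and let $T(\ell,m)=\{\omega'_1,\dots,\omega'_n\}$. The Grassmann code $C(\ell,m)$ is the image of the injective map $\tau:\bigwedge^{m-\ell}V\to\mathbb F_q^n$, $\tau(\omega)=(\omega'_1\wedge\omega,\dots,\omega'_n\wedge\omega)$. For a subspace $\mathcal E$ of $\bigwedge^{\ell}V$, $g(\mathcal E)=|\mathcal E\cap T(\ell,m)|$, and $g_s(\ell,m)=\max\{g(\mathcal E):\mathcal E\text{ a subspace of }\bigwedge^\ell V\text{ of codimension }s\}$. For a code $C$, $d_r(C)=\min\{\|D\|: D\subseteq C\text{ subspace},\ \dim D=r\}$, where $\|D\|$ is the number of coordinates $i$ such that $x_i\neq0$ for some $x\in D$. *)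

theory Defs
  imports Complex_Main "HOL-Library.Function_Algebras"
begin

definition fscale :: "'a::field \<Rightarrow> ('x \<Rightarrow> 'a) \<Rightarrow> ('x \<Rightarrow> 'a)" where
  "fscale c f = (\<lambda>x. c * f x)"

abbreviation fsubspace :: "('x \<Rightarrow> 'a::field) set \<Rightarrow> bool" where
  "fsubspace S \<equiv> module.subspace fscale S"
abbreviation fspan :: "('x \<Rightarrow> 'a::field) set \<Rightarrow> ('x \<Rightarrow> 'a) set" where
  "fspan S \<equiv> module.span fscale S"
abbreviation findependent :: "('x \<Rightarrow> 'a::field) set \<Rightarrow> bool" where
  "findependent S \<equiv> \<not> module.dependent fscale S"
abbreviation fdim :: "('x \<Rightarrow> 'a::field) set \<Rightarrow> nat" where
  "fdim S \<equiv> vector_space.dim fscale S"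

text \<open>V = F^m: vectors with coordinates indexed by 0..m-1 (e_{i+1} is the i-th unit vector).\<close>
definition Vsp :: "nat \<Rightarrow> (nat \<Rightarrow> 'a::field) set" where
  "Vsp m = {v. \<forall>i. m \<le> i \<longrightarrow> v i = 0}"

text \<open>The exterior power \<And>^k V in coordinates w.r.t. the standard basis e_I
  (I a k-subset of {0..<m}, e_I = e_{i1} wedge ... wedge e_{ik} with i1<...<ik).\<close>
definition Ext :: "nat \<Rightarrow> nat \<Rightarrow> (nat set \<Rightarrow> 'a::field) set" where
  "Ext k m = {\<alpha>. \<forall>I. \<alpha> I \<noteq> 0 \<longrightarrow> I \<subseteq> {0..<m} \<and> card I = k}"

text \<open>Wedge product in the exterior algebra: e_I wedge e_J = (-1)^{inv(I,J)} e_{I \<union> J}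
  for disjoint I, J, where inv(I,J) = #{(i,j) in I x J. j < i}.\<close>
definition wedge :: "(nat set \<Rightarrow> 'a::field) \<Rightarrow> (nat set \<Rightarrow> 'a) \<Rightarrow> (nat set \<Rightarrow> 'a)" where
  "wedge \<alpha> \<beta> = (\<lambda>K. \<Sum>I\<in>Pow K.
      (-1) ^ card {(i, j). i \<in> I \<and> j \<in> K - I \<and> j < i} * \<alpha> I * \<beta> (K - I))"

definition ext_one :: "nat set \<Rightarrow> 'a::field" where
  "ext_one = (\<lambda>I. if I = {} then 1 else 0)"

definition vec1 :: "(nat \<Rightarrow> 'a::field) \<Rightarrow> (nat set \<Rightarrow> 'a)" where
  "vec1 v = (\<lambda>I. if card I = 1 then v (the_elem I) else 0)"

definition wedge_list :: "(nat \<Rightarrow> 'a::field) list \<Rightarrow> (nat set \<Rightarrow> 'a)" where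
  "wedge_list vs = foldr (\<lambda>v acc. wedge (vec1 v) acc) vs ext_one"

text \<open>Identification of \<And>^m V with F via e_1 wedge ... wedge e_m = 1.\<close>
definition top_coeff :: "nat \<Rightarrow> (nat set \<Rightarrow> 'a::field) \<Rightarrow> 'a" where
  "top_coeff m \<alpha> = \<alpha> {0..<m}"

text \<open>The set of l-dimensional subspaces of V = F^m (the coordinate index set of C(l,m)).\<close>
definition Grass :: "nat \<Rightarrow> nat \<Rightarrow> (nat \<Rightarrow> 'a::field) set set" where
  "Grass l m = {W. W \<subseteq> Vsp m \<and> fsubspace W \<and> fdim W = l}"

text \<open>rep is an admissible choice of representatives omega'_W = v_1 wedge ... wedge v_l,
  with v_1..v_l a basis of W, for each l-dimensional subspace W.\<close>
definition is_rep :: "nat \<Rightarrow> nat \<Rightarrow> ((nat \<Rightarrow> 'a::field) set \<Rightarrow> (nat set \<Rightarrow> 'a)) \<Rightarrow> bool" where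
  "is_rep l m rep \<longleftrightarrow> (\<forall>W \<in> Grass l m. \<exists>vs. length vs = l \<and> distinct vs \<and>
      findependent (set vs) \<and> fspan (set vs) = W \<and> rep W = wedge_list vs)"

definition Tset :: "nat \<Rightarrow> nat \<Rightarrow> ((nat \<Rightarrow> 'a::field) set \<Rightarrow> (nat set \<Rightarrow> 'a)) \<Rightarrow> (nat set \<Rightarrow> 'a) set" where
  "Tset l m rep = rep ` Grass l m"

definition tau :: "nat \<Rightarrow> nat \<Rightarrow> ((nat \<Rightarrow> 'a::field) set \<Rightarrow> (nat set \<Rightarrow> 'a)) \<Rightarrow>
    (nat set \<Rightarrow> 'a) \<Rightarrow> ((nat \<Rightarrow> 'a) set \<Rightarrow> 'a)" where
  "tau l m rep \<omega> = (\<lambda>W. if W \<in> Grass l m then top_coeff m (wedge (rep W) \<omega>) else 0)"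

definition grassmann_code :: "nat \<Rightarrow> nat \<Rightarrow> ((nat \<Rightarrow> 'a::field) set \<Rightarrow> (nat set \<Rightarrow> 'a)) \<Rightarrow>
    ((nat \<Rightarrow> 'a) set \<Rightarrow> 'a) set" where
  "grassmann_code l m rep = tau l m rep ` Ext (m - l) m"

definition supp_size :: "'i set \<Rightarrow> ('i \<Rightarrow> 'a::field) set \<Rightarrow> nat" where
  "supp_size Idx D = card {i \<in> Idx. \<exists>x \<in> D. x i \<noteq> 0}"

definition ghw :: "'i set \<Rightarrow> ('i \<Rightarrow> 'a::field) set \<Rightarrow> nat \<Rightarrow> nat" where
  "ghw Idx C r = Min {supp_size Idx D | D. D \<subseteq> C \<and> fsubspace D \<and> fdim D = r}"

definition gE :: "nat \<Rightarrow> nat \<Rightarrow> ((nat \<Rightarrow> 'a::field) set \<Rightarrow> (nat set \<Rightarrow> 'a)) \<Rightarrow>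
    (nat set \<Rightarrow> 'a) set \<Rightarrow> nat" where
  "gE l m rep E = card (E \<inter> Tset l m rep)"

definition g_s :: "nat \<Rightarrow> nat \<Rightarrow> ((nat \<Rightarrow> 'a::field) set \<Rightarrow> (nat set \<Rightarrow> 'a)) \<Rightarrow> nat \<Rightarrow> nat" where
  "g_s l m rep s = Max {gE l m rep E | E. E \<subseteq> Ext l m \<and> fsubspace E \<and>
      fdim (Ext l m :: (nat set \<Rightarrow> 'a) set) - fdim E = s}"

end

theory Submission
  imports Defs "HOL-Library.FuncSet"
begin

(*
  The standard basis e_I of the l-th exterior power identifies it with the coordinate space
  F^X, X the l-subsets of {0..<m}, and the top coefficient of alpha wedge omega is the standard
  pairing of alpha with a signed complement ("Hodge star") of omega.  Hence C(l,m) is the code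
  whose coordinates are the linear forms <rep W, _> on F^X.  The representatives span F^X (they
  include nonzero multiples of every e_I), so the encoding is injective: an s-dimensional subcode
  is the image of an s-dimensional subspace U, and its support misses exactly the W with
  rep W in U^perp.  Since U |-> U^perp is a bijection from the s-dimensional subspaces onto those
  of codimension s, d_s = n - max |E \<inter> T(l,m)|.
*)

section \<open>Dimension counts in finite sets of vectors\<close>

context vector_space begin

lemma dim_insert_finite:
  assumes "finite S"
  shows "dim (insert x S) = (if x \<in> span S then dim S else dim S + 1)"
proof (cases "x \<in> span S")
  case True
  then show ?thesis by (metis dim_span span_redundant)
next
  case False
  obtain B where B: "B \<subseteq> S" "independent B" "S \<subseteq> span B" "card B = dim S"
    using basis_exists by blast
  have "finite B" using B(1) assms finite_subset by blast
  have "x \<notin> span B" using False span_mono[OF B(1)] by blast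
  then have "x \<notin> B" using span_base by blast
  have "dim (insert x S) = card (insert x B)"
  proof (rule dim_unique)
    show "insert x B \<subseteq> insert x S" using B(1) by blast
    show "insert x S \<subseteq> span (insert x B)"
      using B(3) span_mono[of B "insert x B"] span_base[of x "insert x B"] by blast
    show "independent (insert x B)" using \<open>x \<notin> span B\<close> B(2) by (rule independent_insertI)
  qed simp
  then show ?thesis using False B(4) \<open>finite B\<close> \<open>x \<notin> B\<close> by simp
qed

lemma independent_card_le_dim_finite:
  assumes "finite T" "B \<subseteq> T" "independent B"
  shows "card B \<le> dim T"
proof -
  obtain C where C: "C \<subseteq> T" "independent C" "T \<subseteq> span C" "card C = dim T"
    using basis_exists by blast
  have "finite C" using C(1) assms(1) finite_subset by blast
  have "B \<subseteq> span C" using assms(2) C(3) by blast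
  then show ?thesis
    using independent_span_bound[OF \<open>finite C\<close> assms(3)] C(4) by simp
qed

lemma dim_subset_finite:
  assumes "finite T" "S \<subseteq> T"
  shows "dim S \<le> dim T"
proof -
  obtain B where "B \<subseteq> S" "independent B" "card B = dim S"
    using basis_exists by metis
  then show ?thesis using independent_card_le_dim_finite[of T B] assms by auto
qed

lemma dim_le_Suc_if_span_insert:
  assumes "finite S" "V \<subseteq> span (insert a S)"
  shows "dim V \<le> dim S + 1"
proof -
  obtain B where B: "B \<subseteq> S" "independent B" "S \<subseteq> span B" "card B = dim S"
    using basis_exists by blast
  have "finite B" using B(1) assms(1) finite_subset by blast
  have "insert a S \<subseteq> span (insert a B)"
    using B(3) span_mono[of B "insert a B"] span_base[of a "insert a B"] by blast
  then have "span (insert a S) \<subseteq> span (insert a B)"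
    by (rule span_minimal) simp
  then have "dim V \<le> card (insert a B)"
    using assms(2) \<open>finite B\<close> by (intro dim_le_card) auto
  also have "\<dots> \<le> dim S + 1"
    using B(4) \<open>finite B\<close> by (simp add: card_insert_if)
  finally show ?thesis .
qed

lemma dim_zero_space: "dim {0} = 0"
  using dim_span[of "{}"] dim_eq_card_independent[OF independent_empty] by (simp add: span_empty)

lemma subspace_eq_if_dim_le:
  assumes "finite T" "subspace S" "S \<subseteq> T" "dim T \<le> dim S"
  shows "S = T"
proof (rule ccontr)
  assume "S \<noteq> T"
  then obtain x where x: "x \<in> T" "x \<notin> S" using assms(3) by blast
  obtain B where B: "B \<subseteq> S" "independent B" "S \<subseteq> span B" "card B = dim S"
    using basis_exists by blast
  have "B \<subseteq> T" using B(1) assms(3) by blast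
  then have "finite B" using assms(1) by (rule finite_subset)
  have "x \<notin> span B" using x(2) span_minimal[OF B(1) assms(2)] by blast
  then have "x \<notin> B" using span_base by blast
  then have "card (insert x B) = dim S + 1" using B(4) \<open>finite B\<close> by simp
  moreover have "card (insert x B) \<le> dim T"
    using B(1) assms(3) x(1) independent_insertI[OF \<open>x \<notin> span B\<close> B(2)]
    by (intro independent_card_le_dim_finite[OF assms(1)]) auto
  ultimately show False using assms(4) by simp
qed

lemma dim_set_Cons_eq_length:
  "dim (set (v # vs)) = length (v # vs) \<longleftrightarrow> v \<notin> span (set vs) \<and> dim (set vs) = length vs"
proof -
  have "dim (set vs) \<le> length vs"
    using dim_le_card'[of "set vs"] card_length[of vs] by simp
  then show ?thesis by (simp add: dim_insert_finite)
qed

lemma span_insert_shear: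
  "span (insert v ((\<lambda>r. r - f r *s v) ` S)) = span (insert v S)"
proof -
  have "insert v ((\<lambda>r. r - f r *s v) ` S) \<subseteq> span (insert v S)"
    by (auto intro: span_diff span_scale span_base)
  moreover have "r \<in> span (insert v ((\<lambda>r. r - f r *s v) ` S))" if "r \<in> S" for r
  proof -
    have "(r - f r *s v) + f r *s v \<in> span (insert v ((\<lambda>r. r - f r *s v) ` S))"
      using that by (intro span_add span_scale span_base) auto
    then show ?thesis by simp
  qed
  then have "insert v S \<subseteq> span (insert v ((\<lambda>r. r - f r *s v) ` S))"
    by (auto intro: span_base)
  ultimately show ?thesis by (simp only: span_eq)
qed

end

section \<open>Orthogonal spaces in coordinate spaces\<close>

interpretation FV: vector_space "fscale :: 'a::field \<Rightarrow> ('x \<Rightarrow> 'a) \<Rightarrow> ('x \<Rightarrow> 'a)"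
  by unfold_locales (auto simp: fscale_def algebra_simps fun_eq_iff)

definition coord_space :: "'i set \<Rightarrow> ('i \<Rightarrow> 'a::field) set" where
  "coord_space X = {u. \<forall>i. i \<notin> X \<longrightarrow> u i = 0}"

definition dot :: "'i set \<Rightarrow> ('i \<Rightarrow> 'a::field) \<Rightarrow> ('i \<Rightarrow> 'a) \<Rightarrow> 'a" where
  "dot X a u = (\<Sum>i\<in>X. a i * u i)"

definition orth :: "'i set \<Rightarrow> ('i \<Rightarrow> 'a::field) set \<Rightarrow> ('i \<Rightarrow> 'a) set" where
  "orth X U = {a \<in> coord_space X. \<forall>u\<in>U. dot X a u = 0}"

definition unit_vec :: "'i \<Rightarrow> 'i \<Rightarrow> 'a::field" where
  "unit_vec i = (\<lambda>j. if j = i then 1 else 0)"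

lemma fscale_apply: "fscale c f x = c * f x"
  by (simp add: fscale_def)

lemma sum_apply: "(sum f A) x = (\<Sum>a\<in>A. f a x)"
  by (induction A rule: infinite_finite_induct) auto

lemma dot_commute: "dot X a u = dot X u a"
  by (simp add: dot_def mult.commute)

lemma dot_add_right: "dot X a (u + v) = dot X a u + dot X a v"
  by (simp add: dot_def algebra_simps sum.distrib)

lemma dot_diff_right: "dot X a (u - v) = dot X a u - dot X a v"
  by (simp add: dot_def algebra_simps sum_subtractf)

lemma dot_scale_right: "dot X a (fscale c u) = c * dot X a u"
  by (simp add: dot_def sum_distrib_left algebra_simps fscale_apply)

lemma dot_add_left: "dot X (a + b) u = dot X a u + dot X b u"
  by (simp add: dot_def algebra_simps sum.distrib)

lemma dot_diff_left: "dot X (a - b) u = dot X a u - dot X b u"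
  by (simp add: dot_def algebra_simps sum_subtractf)

lemma dot_scale_left: "dot X (fscale c a) u = c * dot X a u"
  by (simp add: dot_def sum_distrib_left algebra_simps fscale_apply)

lemma dot_zero_left [simp]: "dot X 0 u = 0"
  by (simp add: dot_def)

lemma dot_unit_vec:
  assumes "finite X" "i \<in> X"
  shows "dot X (unit_vec i) u = u i"
proof -
  have "dot X (unit_vec i) u = (\<Sum>j\<in>X. if j = i then u j else 0)"
    unfolding dot_def by (rule sum.cong) (auto simp: unit_vec_def)
  then show ?thesis using assms by simp
qed

lemma subspace_coord_space: "fsubspace (coord_space X)"
  by (auto simp: FV.subspace_def coord_space_def fscale_apply)

lemma subspace_orth: "fsubspace (orth X U)"
  by (auto simp: FV.subspace_def orth_def coord_space_def dot_add_left dot_scale_left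
      fscale_apply)

lemma subspace_dot_eq_0_left: "fsubspace {a. dot X a u = 0}"
  by (auto simp: FV.subspace_def dot_add_left dot_scale_left)

lemma orth_subset_coord_space: "orth X U \<subseteq> coord_space X"
  by (auto simp: orth_def)

lemma orth_antimono: "U \<subseteq> U' \<Longrightarrow> orth X U' \<subseteq> orth X U"
  by (auto simp: orth_def)

lemma subset_orth_orth: "U \<subseteq> coord_space X \<Longrightarrow> U \<subseteq> orth X (orth X U)"
  by (auto simp: orth_def dot_commute)

lemma orth_insert: "orth X (insert b U) = {a \<in> orth X U. dot X a b = 0}"
  by (auto simp: orth_def)

lemma orth_span: "orth X (fspan S) = orth X S"
proof
  show "orth X (fspan S) \<subseteq> orth X S" by (rule orth_antimono[OF FV.span_superset])
  show "orth X S \<subseteq> orth X (fspan S)"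
  proof
    fix a assume a: "a \<in> orth X S"
    have "fspan S \<subseteq> {u. dot X u a = 0}"
      using a by (intro FV.span_minimal subspace_dot_eq_0_left) (auto simp: orth_def dot_commute)
    then show "a \<in> orth X (fspan S)" using a by (auto simp: orth_def dot_commute)
  qed
qed

lemma finite_coord_space:
  assumes "finite X"
  shows "finite (coord_space X :: ('i \<Rightarrow> 'a::{field,finite}) set)"
proof -
  have "inj_on (\<lambda>u. restrict u X) (coord_space X :: ('i \<Rightarrow> 'a) set)"
    by (auto simp: inj_on_def coord_space_def restrict_def fun_eq_iff) metis
  moreover have "(\<lambda>u. restrict u X) ` (coord_space X :: ('i \<Rightarrow> 'a) set) \<subseteq> PiE X (\<lambda>_. UNIV)"
    by auto
  moreover have "finite (PiE X (\<lambda>_. UNIV :: 'a set))"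
    using assms by (simp add: finite_PiE)
  ultimately show ?thesis using finite_imageD finite_subset by metis
qed

lemma unit_vec_in_coord_space: "i \<in> X \<Longrightarrow> unit_vec i \<in> coord_space X"
  by (auto simp: coord_space_def unit_vec_def)

lemma inj_unit_vec: "inj (unit_vec :: 'i \<Rightarrow> 'i \<Rightarrow> 'a::field)"
proof (rule injI)
  fix i j :: 'i
  assume "unit_vec i = (unit_vec j :: 'i \<Rightarrow> 'a)"
  then have "unit_vec i i = (unit_vec j i :: 'a)" by simp
  then show "i = j" by (simp add: unit_vec_def split: if_splits)
qed

lemma independent_unit_vecs: "findependent (unit_vec ` X :: ('i \<Rightarrow> 'a::field) set)"
proof
  assume "FV.dependent (unit_vec ` X :: ('i \<Rightarrow> 'a) set)"
  then obtain i where i: "i \<in> X" "(unit_vec i :: 'i \<Rightarrow> 'a) \<in> fspan (unit_vec ` X - {unit_vec i})"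
    unfolding FV.dependent_def by blast
  have "fspan (unit_vec ` X - {unit_vec i} :: ('i \<Rightarrow> 'a) set) \<subseteq> {u. u i = 0}"
    by (rule FV.span_minimal) (auto simp: unit_vec_def FV.subspace_def fscale_apply)
  then show False using i(2) by (auto simp: unit_vec_def)
qed

lemma coord_space_eq_span_unit_vecs:
  assumes "finite X"
  shows "coord_space X = fspan (unit_vec ` X :: ('i \<Rightarrow> 'a::field) set)"
proof
  show "fspan (unit_vec ` X) \<subseteq> (coord_space X :: ('i \<Rightarrow> 'a) set)"
    by (intro FV.span_minimal subspace_coord_space) (auto intro: unit_vec_in_coord_space)
  show "coord_space X \<subseteq> fspan (unit_vec ` X :: ('i \<Rightarrow> 'a) set)"
  proof
    fix u :: "'i \<Rightarrow> 'a" assume u: "u \<in> coord_space X"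
    have "u = (\<Sum>i\<in>X. fscale (u i) (unit_vec i))"
    proof
      fix j
      have "(\<Sum>i\<in>X. fscale (u i) (unit_vec i)) j = (\<Sum>i\<in>X. if i = j then u i else 0)"
        unfolding sum_apply by (rule sum.cong) (auto simp: unit_vec_def fscale_apply)
      then show "u j = (\<Sum>i\<in>X. fscale (u i) (unit_vec i)) j"
        using u assms by (auto simp: coord_space_def)
    qed
    also have "\<dots> \<in> fspan (unit_vec ` X)"
      by (intro FV.span_sum FV.span_scale FV.span_base) auto
    finally show "u \<in> fspan (unit_vec ` X)" .
  qed
qed

lemma dim_coord_space:
  assumes "finite X"
  shows "fdim (coord_space X :: ('i \<Rightarrow> 'a::field) set) = card X"
proof -
  have "fdim (coord_space X :: ('i \<Rightarrow> 'a) set) = card (unit_vec ` X :: ('i \<Rightarrow> 'a) set)"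
    unfolding coord_space_eq_span_unit_vecs[OF assms]
    by (rule FV.dim_span_eq_card_independent[OF independent_unit_vecs])
  also have "\<dots> = card X"
    using inj_unit_vec by (rule card_image[OF inj_on_subset]) simp
  finally show ?thesis .
qed

lemma orth_coord_space:
  assumes "finite X"
  shows "orth X (coord_space X :: ('i \<Rightarrow> 'a::field) set) = {0}"
proof -
  have "a i = 0" if a: "a \<in> orth X (coord_space X :: ('i \<Rightarrow> 'a) set)" for a i
  proof (cases "i \<in> X")
    case True
    then have "unit_vec i \<in> (coord_space X :: ('i \<Rightarrow> 'a) set)"
      by (rule unit_vec_in_coord_space)
    then have "dot X a (unit_vec i) = 0" using a by (simp add: orth_def)
    then show ?thesis
      using dot_unit_vec[OF assms True, of a] dot_commute[of X a "unit_vec i"] by simp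
  next
    case False
    then show ?thesis using a by (simp add: orth_def coord_space_def)
  qed
  then have "orth X (coord_space X) \<subseteq> ({0} :: ('i \<Rightarrow> 'a) set)"
    by (auto simp: fun_eq_iff)
  moreover have "0 \<in> orth X (coord_space X :: ('i \<Rightarrow> 'a) set)"
    by (rule FV.subspace_0[OF subspace_orth])
  ultimately show ?thesis by blast
qed

lemma dim_orth_le_insert:
  fixes U :: "('i \<Rightarrow> 'a::{field,finite}) set"
  assumes "finite X"
  shows "fdim (orth X U) \<le> fdim (orth X (insert b U)) + 1"
proof (cases "\<exists>a\<in>orth X U. dot X a b \<noteq> 0")
  case False
  then have "orth X (insert b U) = orth X U" by (auto simp: orth_insert)
  then show ?thesis by simp
next
  case True
  then obtain a where a: "a \<in> orth X U" "dot X a b \<noteq> 0" by blast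
  let ?S = "orth X (insert b U)"
  have "finite ?S"
    using finite_coord_space[OF assms] orth_subset_coord_space finite_subset by metis
  moreover have "orth X U \<subseteq> fspan (insert a ?S)"
  proof
    fix z assume z: "z \<in> orth X U"
    define c where "c = dot X z b / dot X a b"
    \<comment> \<open>Project \<open>z\<close> along \<open>a\<close> onto the hyperplane \<open>dot X _ b = 0\<close>.\<close>
    have "z - fscale c a \<in> orth X U"
      using z a(1) subspace_orth[of X U] by (simp add: FV.subspace_diff FV.subspace_scale)
    moreover have "dot X (z - fscale c a) b = 0"
      using a(2) by (simp add: dot_diff_left dot_scale_left c_def)
    ultimately have "z - fscale c a \<in> ?S" by (simp add: orth_insert)
    then have "(z - fscale c a) + fscale c a \<in> fspan (insert a ?S)"
      by (intro FV.span_add FV.span_scale FV.span_base) auto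
    then show "z \<in> fspan (insert a ?S)" by simp
  qed
  ultimately show ?thesis by (rule FV.dim_le_Suc_if_span_insert)
qed

lemma dim_orth_le_union:
  fixes A :: "('i \<Rightarrow> 'a::{field,finite}) set"
  assumes "finite X" "finite C"
  shows "fdim (orth X A) \<le> fdim (orth X (A \<union> C)) + card C"
  using assms(2)
proof (induction C rule: finite_induct)
  case empty
  then show ?case by simp
next
  case (insert c C)
  have "fdim (orth X (A \<union> C)) \<le> fdim (orth X (A \<union> insert c C)) + 1"
    using dim_orth_le_insert[OF assms(1), of "A \<union> C" c] by simp
  then show ?case using insert by simp
qed

lemma dim_orth:
  fixes U :: "('i \<Rightarrow> 'a::{field,finite}) set"
  assumes X: "finite X" and U: "fsubspace U" "U \<subseteq> coord_space X"
  shows "fdim (orth X U) + fdim U = card X"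
proof -
  have fin: "finite (coord_space X :: ('i \<Rightarrow> 'a) set)" by (rule finite_coord_space[OF X])
  obtain B where B: "B \<subseteq> U" "findependent B" "U \<subseteq> fspan B" "card B = fdim U"
    using FV.basis_exists by blast
  have "finite B" using finite_subset[OF subset_trans[OF B(1) U(2)] fin] .
  have "fspan B \<subseteq> U" using B(1) U(1) by (rule FV.span_minimal)
  then have "fspan B = U" using B(3) by (rule subset_antisym)
  then have orth_B: "orth X B = orth X U" using orth_span[of X B] by simp
  obtain C where C: "B \<subseteq> C" "C \<subseteq> coord_space X" "findependent C" "coord_space X \<subseteq> fspan C"
    using FV.maximal_independent_subset_extend[OF subset_trans[OF B(1) U(2)] B(2)] by blast
  have "finite C" using finite_subset[OF C(2) fin] .
  have "card C = card X"
    using FV.basis_card_eq_dim[OF C(2,4,3)] dim_coord_space[OF X, where 'a='a] by simp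
  \<comment> \<open>Adjoining one vector lowers the dimension of the orthogonal space by at most one; going up
    from \<open>{}\<close> to \<open>B\<close> and from \<open>B\<close> to the basis \<open>C\<close> of the whole space gives both inequalities.\<close>
  have "orth X C \<subseteq> orth X (coord_space X)"
    using orth_antimono[OF C(4), of X] orth_span[of X C] by simp
  also have "\<dots> = {0}" by (rule orth_coord_space[OF X])
  finally have "orth X C \<subseteq> {0}" .
  then have "orth X C = {0}" using FV.subspace_0[OF subspace_orth[of X C]] by blast
  then have "fdim (orth X C) = 0" using FV.dim_zero_space by simp
  moreover have "fdim (orth X B) \<le> fdim (orth X (B \<union> (C - B))) + card (C - B)"
    by (rule dim_orth_le_union[OF X finite_Diff[OF \<open>finite C\<close>]])
  moreover have "B \<union> (C - B) = C" using C(1) by blast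
  moreover have "card (C - B) = card C - card B"
    by (rule card_Diff_subset[OF \<open>finite B\<close> C(1)])
  ultimately have upper: "fdim (orth X U) \<le> card X - fdim U"
    using orth_B B(4) \<open>card C = card X\<close> by simp
  have "orth X {} = (coord_space X :: ('i \<Rightarrow> 'a) set)" by (simp add: orth_def)
  then have "card X \<le> fdim (orth X B) + card B"
    using dim_orth_le_union[OF X \<open>finite B\<close>, of "{}"] dim_coord_space[OF X, where 'a='a] by simp
  moreover have "fdim U \<le> card X"
    using FV.dim_subset_finite[OF fin U(2)] dim_coord_space[OF X, where 'a='a] by simp
  ultimately show ?thesis using upper B(4) orth_B by simp
qed

lemma orth_orth:
  fixes U :: "('i \<Rightarrow> 'a::{field,finite}) set"
  assumes X: "finite X" and U: "fsubspace U" "U \<subseteq> coord_space X"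
  shows "orth X (orth X U) = U"
proof (rule FV.subspace_eq_if_dim_le[symmetric])
  show "finite (orth X (orth X U))"
    using finite_coord_space[OF X] orth_subset_coord_space finite_subset by metis
  show "fdim (orth X (orth X U)) \<le> fdim U"
    using dim_orth[OF X U] dim_orth[OF X subspace_orth orth_subset_coord_space, of U] by simp
  show "U \<subseteq> orth X (orth X U)" using U(2) by (rule subset_orth_orth)
qed (fact U(1))

section \<open>Codes defined by linear forms\<close>

definition eval_map :: "'i set \<Rightarrow> 'g set \<Rightarrow> ('g \<Rightarrow> 'i \<Rightarrow> 'a::field) \<Rightarrow> ('i \<Rightarrow> 'a) \<Rightarrow> 'g \<Rightarrow> 'a"
  where "eval_map X G r u = (\<lambda>W. if W \<in> G then dot X (r W) u else 0)"

lemma module_hom_eval_map: "module_hom fscale fscale (eval_map X G r)"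
proof -
  have "Vector_Spaces.linear fscale fscale (eval_map X G r)"
    by (auto simp: Vector_Spaces.linear_iff FV.vector_space_axioms eval_map_def fun_eq_iff
        dot_add_right dot_scale_right fscale_apply)
  then show ?thesis by (simp add: module_hom_iff_linear)
qed

lemma dim_image_inj:
  fixes f :: "('i \<Rightarrow> 'a::field) \<Rightarrow> 'g \<Rightarrow> 'a"
  assumes f: "module_hom fscale fscale f" and U: "fsubspace U" "finite U" and inj: "inj_on f U"
  shows "fdim (f ` U) = fdim U"
proof -
  obtain B where B: "B \<subseteq> U" "findependent B" "U \<subseteq> fspan B" "card B = fdim U"
    using FV.basis_exists by blast
  have span_B: "fspan B = U"
    using FV.span_minimal[OF B(1) U(1)] B(3) by (rule subset_antisym)
  have "fdim (f ` U) = fdim (fspan (f ` B))"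
    using module_hom.span_image[OF f, of B] span_B by simp
  also have "\<dots> = card (f ` B)"
    using module_hom.independent_injective_image[OF f B(2)] inj span_B
    by (simp add: FV.dim_eq_card_independent)
  also have "\<dots> = fdim U"
    using card_image[OF inj_on_subset[OF inj B(1)]] B(4) by simp
  finally show ?thesis .
qed

lemma inj_on_eval_map:
  assumes X: "finite X" and span: "coord_space X \<subseteq> fspan (r ` G)"
  shows "inj_on (eval_map X G r) (coord_space X :: ('i \<Rightarrow> 'a::field) set)"
proof (rule inj_onI)
  fix u v :: "'i \<Rightarrow> 'a"
  assume u: "u \<in> coord_space X" and v: "v \<in> coord_space X"
    and eq: "eval_map X G r u = eval_map X G r v"
  have "dot X (u - v) (r W) = 0" if "W \<in> G" for W
    using fun_cong[OF eq, of W] that by (simp add: eval_map_def dot_diff_right dot_commute)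
  moreover have "u - v \<in> coord_space X"
    using u v by (rule FV.subspace_diff[OF subspace_coord_space])
  ultimately have "u - v \<in> orth X (r ` G)" by (auto simp: orth_def)
  then have "u - v \<in> orth X (fspan (r ` G))" by (simp only: orth_span)
  also have "\<dots> \<subseteq> orth X (coord_space X)" by (rule orth_antimono[OF span])
  also have "\<dots> = {0}" by (rule orth_coord_space[OF X])
  finally show "u = v" by (auto simp: fun_eq_iff)
qed

lemma supp_size_eval_map_image:
  assumes G: "finite G" and r: "r ` G \<subseteq> coord_space X" "inj_on r G"
  shows "supp_size G (eval_map X G r ` U) = card G - card (orth X U \<inter> r ` G)"
proof -
  define A where "A = {W \<in> G. r W \<in> orth X U}"
  have "A \<subseteq> G" by (auto simp: A_def)
  have "{W \<in> G. \<exists>x \<in> eval_map X G r ` U. x W \<noteq> 0} = G - A"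
    using r(1) by (auto simp: A_def orth_def eval_map_def)
  moreover have "card (G - A) = card G - card A"
    using finite_subset[OF \<open>A \<subseteq> G\<close> G] \<open>A \<subseteq> G\<close> by (simp add: card_Diff_subset)
  moreover have "card A = card (orth X U \<inter> r ` G)"
  proof -
    have "r ` A = orth X U \<inter> r ` G" by (auto simp: A_def)
    then show ?thesis using card_image[OF inj_on_subset[OF r(2) \<open>A \<subseteq> G\<close>]] by simp
  qed
  ultimately show ?thesis by (simp add: supp_size_def)
qed

definition subspaces_of_dim :: "'i set \<Rightarrow> nat \<Rightarrow> ('i \<Rightarrow> 'a::field) set set" where
  "subspaces_of_dim X k = {U. U \<subseteq> coord_space X \<and> fsubspace U \<and> fdim U = k}"

lemma finite_subspaces_of_dim:
  assumes "finite X"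
  shows "finite (subspaces_of_dim X k :: ('i \<Rightarrow> 'a::{field,finite}) set set)"
proof (rule finite_subset)
  show "subspaces_of_dim X k \<subseteq> Pow (coord_space X :: ('i \<Rightarrow> 'a) set)"
    by (auto simp: subspaces_of_dim_def)
qed (simp add: finite_coord_space[OF assms])

lemma subspaces_of_dim_nonempty:
  assumes "k \<le> card X" "finite X"
  shows "subspaces_of_dim X k \<noteq> {}"
proof -
  obtain Y where Y: "Y \<subseteq> X" "card Y = k"
    using obtain_subset_with_card_n[OF assms(1)] by blast
  then have "coord_space Y \<subseteq> coord_space X" by (auto simp: coord_space_def)
  moreover have "fdim (coord_space Y) = k"
    using dim_coord_space[OF finite_subset[OF Y(1) assms(2)]] Y(2) by simp
  ultimately show ?thesis
    using subspace_coord_space by (auto simp: subspaces_of_dim_def)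
qed

lemma eval_map_image_subspaces_of_dim:
  assumes X: "finite X" and inj: "inj_on (eval_map X G r) (coord_space X :: ('i \<Rightarrow> 'a::{field,finite}) set)"
  shows "{D. D \<subseteq> eval_map X G r ` coord_space X \<and> fsubspace D \<and> fdim D = k}
    = (\<lambda>U. eval_map X G r ` U) ` (subspaces_of_dim X k :: ('i \<Rightarrow> 'a) set set)"
proof (intro equalityI subsetI)
  fix D assume "D \<in> {D. D \<subseteq> eval_map X G r ` coord_space X \<and> fsubspace D \<and> fdim D = k}"
  then have D: "D \<subseteq> eval_map X G r ` coord_space X" "fsubspace D" "fdim D = k" by auto
  define U where "U = coord_space X \<inter> eval_map X G r -` D"
  have "fsubspace U" unfolding U_def
    using subspace_coord_space module_hom.subspace_vimage[OF module_hom_eval_map D(2)]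
    by (rule FV.subspace_inter)
  moreover have "U \<subseteq> coord_space X" by (simp add: U_def)
  moreover have "eval_map X G r ` U = D" using D(1) by (auto simp: U_def)
  moreover have "finite U" unfolding U_def by (rule finite_subset[OF Int_lower1 finite_coord_space[OF X]])
  ultimately show "D \<in> (\<lambda>U. eval_map X G r ` U) ` subspaces_of_dim X k"
    using dim_image_inj[OF module_hom_eval_map _ _ inj_on_subset[OF inj]] D(3)
    unfolding subspaces_of_dim_def by (metis (mono_tags, lifting) image_eqI mem_Collect_eq)
next
  fix D assume "D \<in> (\<lambda>U. eval_map X G r ` U) ` (subspaces_of_dim X k :: ('i \<Rightarrow> 'a) set set)"
  then obtain U :: "('i \<Rightarrow> 'a) set" where U: "U \<subseteq> coord_space X" "fsubspace U" "fdim U = k"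
    and D: "D = eval_map X G r ` U" by (auto simp: subspaces_of_dim_def)
  have "finite U" by (rule finite_subset[OF U(1) finite_coord_space[OF X]])
  then show "D \<in> {D. D \<subseteq> eval_map X G r ` coord_space X \<and> fsubspace D \<and> fdim D = k}"
    using U D module_hom.subspace_image[OF module_hom_eval_map U(2)]
      dim_image_inj[OF module_hom_eval_map U(2) _ inj_on_subset[OF inj U(1)]] by auto
qed

lemma orth_image_subspaces_of_dim:
  fixes X :: "'i set"
  assumes X: "finite X" and k: "k \<le> card X"
  shows "orth X ` (subspaces_of_dim X k :: ('i \<Rightarrow> 'a::{field,finite}) set set)
    = {E. E \<subseteq> coord_space X \<and> fsubspace E \<and> fdim (coord_space X :: ('i \<Rightarrow> 'a) set) - fdim E = k}"
    (is "_ = ?E")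
proof (intro equalityI subsetI)
  fix E :: "('i \<Rightarrow> 'a) set" assume "E \<in> orth X ` subspaces_of_dim X k"
  then obtain U where U: "U \<subseteq> coord_space X" "fsubspace U" "fdim U = k" and E: "E = orth X U"
    by (auto simp: subspaces_of_dim_def)
  show "E \<in> ?E"
    using dim_orth[OF X U(2,1)] dim_coord_space[OF X, where 'a='a] U(3) E
      orth_subset_coord_space subspace_orth by auto
next
  fix E :: "('i \<Rightarrow> 'a) set" assume "E \<in> ?E"
  then have E: "E \<subseteq> coord_space X" "fsubspace E"
    "fdim (coord_space X :: ('i \<Rightarrow> 'a) set) - fdim E = k" by auto
  have "fdim E \<le> card X"
    using FV.dim_subset_finite[OF finite_coord_space[OF X] E(1)] dim_coord_space[OF X, where 'a='a]
    by simp
  then have "orth X E \<in> subspaces_of_dim X k"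
    using dim_orth[OF X E(2,1)] dim_coord_space[OF X, where 'a='a] E(3) k
      orth_subset_coord_space subspace_orth by (auto simp: subspaces_of_dim_def)
  then show "E \<in> orth X ` subspaces_of_dim X k" using orth_orth[OF X E(2,1)] by force
qed

lemma Min_diff_eq_diff_Max:
  fixes g :: "'e \<Rightarrow> nat"
  assumes "finite A" "A \<noteq> {}"
  shows "Min ((\<lambda>x. n - g x) ` A) = n - Max (g ` A)"
proof -
  have "Max (g ` A) \<in> g ` A" using assms by (intro Max_in) auto
  then obtain x0 where x0: "x0 \<in> A" "g x0 = Max (g ` A)" by auto
  show ?thesis
  proof (rule Min_eqI)
    show "n - Max (g ` A) \<in> (\<lambda>x. n - g x) ` A" using x0 by force
    fix y assume "y \<in> (\<lambda>x. n - g x) ` A"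
    then obtain x where "x \<in> A" "y = n - g x" by blast
    then show "n - Max (g ` A) \<le> y" using assms by (simp add: diff_le_mono2)
  qed (use assms in simp)
qed

theorem ghw_eval_code:
  fixes r :: "'g \<Rightarrow> 'i \<Rightarrow> 'a::{field,finite}"
  assumes X: "finite X" and G: "finite G"
    and r: "r ` G \<subseteq> coord_space X" "inj_on r G" and span: "coord_space X \<subseteq> fspan (r ` G)"
    and s: "s \<le> card X"
  shows "ghw G (eval_map X G r ` coord_space X) s = card G - Max {card (E \<inter> r ` G) | E.
    E \<subseteq> coord_space X \<and> fsubspace E \<and> fdim (coord_space X :: ('i \<Rightarrow> 'a) set) - fdim E = s}"
proof -
  let ?Us = "subspaces_of_dim X s :: ('i \<Rightarrow> 'a) set set"
  let ?g = "\<lambda>E. card (E \<inter> r ` G)"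
  have "{supp_size G D | D. D \<subseteq> eval_map X G r ` coord_space X \<and> fsubspace D \<and> fdim D = s}
      = supp_size G ` {D. D \<subseteq> eval_map X G r ` coord_space X \<and> fsubspace D \<and> fdim D = s}"
    by blast
  also have "\<dots> = supp_size G ` (\<lambda>U. eval_map X G r ` U) ` ?Us"
    by (simp only: eval_map_image_subspaces_of_dim[OF X inj_on_eval_map[OF X span]])
  also have "\<dots> = (\<lambda>E. card G - ?g E) ` orth X ` ?Us"
    by (simp add: image_image supp_size_eval_map_image[OF G r])
  finally have "ghw G (eval_map X G r ` coord_space X) s
      = Min ((\<lambda>E. card G - ?g E) ` orth X ` ?Us)"
    by (simp only: ghw_def)
  also have "\<dots> = card G - Max (?g ` orth X ` ?Us)"
    using finite_subspaces_of_dim[OF X] subspaces_of_dim_nonempty[OF s X]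
    by (intro Min_diff_eq_diff_Max) auto
  also have "?g ` orth X ` ?Us = {?g E | E.
      E \<subseteq> coord_space X \<and> fsubspace E \<and> fdim (coord_space X :: ('i \<Rightarrow> 'a) set) - fdim E = s}"
    by (simp only: orth_image_subspaces_of_dim[OF X s] image_Collect)
  finally show ?thesis .
qed

section \<open>Wedge products of vectors\<close>

lemma wedge_infinite: "infinite K \<Longrightarrow> wedge \<alpha> \<beta> K = 0"
  by (simp add: wedge_def)

definition wedge_sign :: "nat set \<Rightarrow> nat \<Rightarrow> 'a::field" where
  "wedge_sign K i = (-1) ^ card {j \<in> K. j < i}"

lemma wedge_sign_nonzero: "wedge_sign K i \<noteq> 0"
  by (simp add: wedge_sign_def)

lemma wedge_vec1_apply:
  assumes "finite K"
  shows "wedge (vec1 v) Y K = (\<Sum>i\<in>K. wedge_sign K i * v i * Y (K - {i}))"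
proof -
  define g where "g I = (-1) ^ card {(i, j). i \<in> I \<and> j \<in> K - I \<and> j < i} * vec1 v I * Y (K - I)"
    for I
  have "wedge (vec1 v) Y K = sum g (Pow K)" by (simp add: wedge_def g_def)
  also have "\<dots> = sum g ((\<lambda>i. {i}) ` K)"
  proof (rule sum.mono_neutral_right)
    show "\<forall>I\<in>Pow K - (\<lambda>i. {i}) ` K. g I = 0"
    proof
      fix I assume I: "I \<in> Pow K - (\<lambda>i. {i}) ` K"
      have "card I \<noteq> 1"
      proof
        assume "card I = 1"
        then obtain x where "I = {x}" by (rule card_1_singletonE)
        then show False using I by auto
      qed
      then show "g I = 0" by (simp add: g_def vec1_def)
    qed
  qed (use assms in auto)
  also have "\<dots> = (\<Sum>i\<in>K. g {i})"
    by (rule sum.reindex_cong[of "\<lambda>i. {i}"]) (auto simp: inj_on_def)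
  also have "\<dots> = (\<Sum>i\<in>K. wedge_sign K i * v i * Y (K - {i}))"
  proof (rule sum.cong[OF refl])
    fix i assume "i \<in> K"
    have "{(i', j). i' \<in> {i} \<and> j \<in> K - {i} \<and> j < i'} = Pair i ` {j \<in> K. j < i}"
      by auto
    then have "card {(i', j). i' \<in> {i} \<and> j \<in> K - {i} \<and> j < i'} = card {j \<in> K. j < i}"
      by (simp add: card_image inj_on_def)
    then show "g {i} = wedge_sign K i * v i * Y (K - {i})"
      by (simp add: g_def wedge_sign_def vec1_def)
  qed
  finally show ?thesis .
qed

lemma wedge_add_left: "wedge (\<alpha> + \<beta>) \<gamma> = wedge \<alpha> \<gamma> + wedge \<beta> \<gamma>"
  by (simp add: wedge_def fun_eq_iff algebra_simps sum.distrib)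

lemma wedge_add_right: "wedge \<alpha> (\<beta> + \<gamma>) = wedge \<alpha> \<beta> + wedge \<alpha> \<gamma>"
  by (simp add: wedge_def fun_eq_iff algebra_simps sum.distrib)

lemma wedge_diff_left: "wedge (\<alpha> - \<beta>) \<gamma> = wedge \<alpha> \<gamma> - wedge \<beta> \<gamma>"
  by (simp add: wedge_def fun_eq_iff algebra_simps sum_subtractf)

lemma wedge_diff_right: "wedge \<alpha> (\<beta> - \<gamma>) = wedge \<alpha> \<beta> - wedge \<alpha> \<gamma>"
  by (simp add: wedge_def fun_eq_iff algebra_simps sum_subtractf)

lemma wedge_scale_left: "wedge (fscale c \<alpha>) \<beta> = fscale c (wedge \<alpha> \<beta>)"
  by (simp add: wedge_def fun_eq_iff algebra_simps sum_distrib_left fscale_apply)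

lemma wedge_scale_right: "wedge \<alpha> (fscale c \<beta>) = fscale c (wedge \<alpha> \<beta>)"
  by (simp add: wedge_def fun_eq_iff algebra_simps sum_distrib_left fscale_apply)

lemma wedge_zero_left [simp]: "wedge 0 \<beta> = 0"
  by (simp add: wedge_def fun_eq_iff)

lemma wedge_zero_right [simp]: "wedge \<alpha> 0 = 0"
  by (simp add: wedge_def fun_eq_iff)

lemma vec1_zero [simp]: "vec1 0 = 0"
  by (simp add: vec1_def fun_eq_iff)

lemma vec1_add: "vec1 (v + w) = vec1 v + vec1 w"
  by (simp add: vec1_def fun_eq_iff)

lemma vec1_diff: "vec1 (v - w) = vec1 v - vec1 w"
  by (simp add: vec1_def fun_eq_iff)

lemma vec1_scale: "vec1 (fscale c v) = fscale c (vec1 v)"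
  by (simp add: vec1_def fun_eq_iff fscale_apply)

lemma sum_antisym_eq_0:
  fixes f :: "nat \<Rightarrow> nat \<Rightarrow> 'a::comm_ring"
  assumes "finite K" and antisym: "\<And>i j. i \<in> K \<Longrightarrow> j \<in> K \<Longrightarrow> i < j \<Longrightarrow> f j i = - f i j"
  shows "(\<Sum>i\<in>K. \<Sum>j\<in>K - {i}. f i j) = 0"
proof -
  define P where "P = {(i, j). i \<in> K \<and> j \<in> K \<and> i < j}"
  have "finite P" using assms(1) by (auto simp: P_def intro: finite_subset[of _ "K \<times> K"])
  have "(\<Sum>i\<in>K. \<Sum>j\<in>K - {i}. f i j) = (\<Sum>(i, j)\<in>Sigma K (\<lambda>i. K - {i}). f i j)"
    using assms(1) by (simp add: sum.Sigma)
  also have "Sigma K (\<lambda>i. K - {i}) = P \<union> prod.swap ` P" by (auto simp: P_def)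
  also have "(\<Sum>(i, j)\<in>P \<union> prod.swap ` P. f i j) = (\<Sum>(i, j)\<in>P. f i j) + (\<Sum>(i, j)\<in>P. f j i)"
    using \<open>finite P\<close> by (subst sum.union_disjoint) (auto simp: P_def sum.reindex)
  also have "(\<Sum>(i, j)\<in>P. f j i) = - (\<Sum>(i, j)\<in>P. f i j)"
    by (auto simp: P_def antisym sum_negf[symmetric] intro!: sum.cong)
  finally show ?thesis by simp
qed

lemma wedge_sign_swap:
  assumes "finite K" "i \<in> K" "j \<in> K" "i < j"
  shows "(wedge_sign K j * wedge_sign (K - {j}) i :: 'a::field)
    = - (wedge_sign K i * wedge_sign (K - {i}) j)"
proof -
  have "{x \<in> K - {j}. x < i} = {x \<in> K. x < i}" using assms by auto
  moreover have "{x \<in> K. x < j} = insert i {x \<in> K - {i}. x < j}" using assms by auto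
  ultimately show ?thesis using assms(1) by (simp add: wedge_sign_def)
qed

lemma wedge_vec1_self: "wedge (vec1 v) (wedge (vec1 v) Y) = 0"
proof
  fix K
  show "wedge (vec1 v) (wedge (vec1 v) Y) K = 0 K"
  proof (cases "finite K")
    case False
    then show ?thesis by (simp add: wedge_infinite)
  next
    case True
    define f where "f i j = wedge_sign K i * wedge_sign (K - {i}) j * v i * v j * Y (K - {i} - {j})"
      for i j
    have "wedge (vec1 v) (wedge (vec1 v) Y) K = (\<Sum>i\<in>K. \<Sum>j\<in>K - {i}. f i j)"
      using True by (simp add: wedge_vec1_apply f_def sum_distrib_left algebra_simps)
    also have "\<dots> = 0"
    proof (rule sum_antisym_eq_0[OF True])
      fix i j assume ij: "i \<in> K" "j \<in> K" "i < j"
      have "K - {j} - {i} = K - {i} - {j}" by auto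
      then show "f j i = - f i j"
        using wedge_sign_swap[OF True ij, where 'a='a] by (simp add: f_def algebra_simps)
    qed
    finally show ?thesis by simp
  qed
qed

lemma wedge_vec1_swap:
  "wedge (vec1 v) (wedge (vec1 w) Y) = - wedge (vec1 w) (wedge (vec1 v) Y)"
proof -
  have "0 = wedge (vec1 (v + w)) (wedge (vec1 (v + w)) Y)" by (simp only: wedge_vec1_self)
  also have "\<dots> = wedge (vec1 v) (wedge (vec1 w) Y) + wedge (vec1 w) (wedge (vec1 v) Y)"
    by (simp add: vec1_add wedge_add_left wedge_add_right wedge_vec1_self)
  finally show ?thesis by (simp add: eq_neg_iff_add_eq_0)
qed

lemma wedge_list_Cons: "wedge_list (v # vs) = wedge (vec1 v) (wedge_list vs)"
  by (simp add: wedge_list_def)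

lemma wedge_vec1_wedge_list_member: "u \<in> set vs \<Longrightarrow> wedge (vec1 u) (wedge_list vs) = 0"
proof (induction vs)
  case (Cons h t)
  show ?case
  proof (cases "u = h")
    case True
    then show ?thesis by (simp only: wedge_list_Cons wedge_vec1_self)
  next
    case False
    then have "u \<in> set t" using Cons.prems by simp
    then have "wedge (vec1 u) (wedge_list t) = 0" by (rule Cons.IH)
    then show ?thesis by (simp add: wedge_list_Cons wedge_vec1_swap[of u h])
  qed
qed simp

lemma wedge_vec1_wedge_list_span:
  assumes "u \<in> fspan (set vs)"
  shows "wedge (vec1 u) (wedge_list vs) = 0"
proof -
  have "fsubspace {u. wedge (vec1 u) (wedge_list vs) = 0}"
    by (auto simp: FV.subspace_def vec1_add wedge_add_left vec1_scale wedge_scale_left)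
  then have "fspan (set vs) \<subseteq> {u. wedge (vec1 u) (wedge_list vs) = 0}"
    using wedge_vec1_wedge_list_member by (intro FV.span_minimal) auto
  then show ?thesis using assms by blast
qed

lemma wedge_list_support:
  assumes "\<forall>v\<in>set vs. \<forall>i. i \<notin> S \<longrightarrow> v i = 0" and "wedge_list vs K \<noteq> 0"
  shows "finite K \<and> K \<subseteq> S \<and> card K = length vs"
  using assms
proof (induction vs arbitrary: K)
  case Nil
  then show ?case by (simp add: wedge_list_def ext_one_def split: if_splits)
next
  case (Cons v vs)
  have "finite K" using Cons.prems(2) wedge_infinite by (fastforce simp: wedge_list_Cons)
  then have "(\<Sum>i\<in>K. wedge_sign K i * v i * wedge_list vs (K - {i})) \<noteq> 0"
    using Cons.prems(2) by (simp add: wedge_list_Cons wedge_vec1_apply)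
  then obtain i where "i \<in> K" "wedge_sign K i * v i * wedge_list vs (K - {i}) \<noteq> 0"
    using sum.not_neutral_contains_not_neutral by blast
  then have i: "i \<in> K" "v i \<noteq> 0" "wedge_list vs (K - {i}) \<noteq> 0" by auto
  have "i \<in> S" using i(2) Cons.prems(1) by auto
  moreover have "K - {i} \<subseteq> S \<and> card (K - {i}) = length vs"
    using Cons.IH[of "K - {i}"] Cons.prems(1) i(3) by simp
  ultimately show ?case using \<open>finite K\<close> card_Suc_Diff1[OF \<open>finite K\<close> i(1)] by auto
qed

lemma wedge_vec1_wedge_list_shear:
  "wedge (vec1 v) (wedge_list (map (\<lambda>r. r - fscale (f r) v) rs)) = wedge (vec1 v) (wedge_list rs)"
proof (induction rs)
  case (Cons r rs)
  let ?Z = "wedge_list (map (\<lambda>r. r - fscale (f r) v) rs)"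
  have "wedge (vec1 v) (wedge (vec1 (r - fscale (f r) v)) ?Z)
      = wedge (vec1 v) (wedge (vec1 r) ?Z) - fscale (f r) (wedge (vec1 v) (wedge (vec1 v) ?Z))"
    by (simp only: vec1_diff vec1_scale wedge_diff_left wedge_scale_left wedge_diff_right
        wedge_scale_right)
  also have "\<dots> = - wedge (vec1 r) (wedge (vec1 v) ?Z)"
    by (simp add: wedge_vec1_self wedge_vec1_swap[of v r])
  also have "\<dots> = wedge (vec1 v) (wedge (vec1 r) (wedge_list rs))"
    by (simp add: Cons.IH wedge_vec1_swap[of v r])
  finally show ?case by (simp only: wedge_list_Cons list.map)
qed simp

lemma wedge_vec1_apply_insert:
  assumes "finite K" "p \<notin> K" "\<And>J. p \<in> J \<Longrightarrow> Y J = 0"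
  shows "wedge (vec1 v) Y (insert p K) = wedge_sign (insert p K) p * v p * Y K"
proof -
  have "Y (insert p K - {i}) = 0" if "i \<in> K" for i
    using assms(2) that by (intro assms(3)) auto
  then have "(\<Sum>i\<in>K. wedge_sign (insert p K) i * v i * Y (insert p K - {i})) = 0"
    by simp
  then show ?thesis
    using assms(1,2) by (simp add: wedge_vec1_apply sum.insert)
qed

lemma wedge_list_nonzero:
  assumes "fdim (set vs) = length vs"
  shows "wedge_list vs \<noteq> (0 :: nat set \<Rightarrow> 'a::field)"
  using assms
proof (induction "length vs" arbitrary: vs)
  case 0
  then show ?case by (simp add: wedge_list_def ext_one_def fun_eq_iff)
next
  case (Suc n)
  then obtain v rest where vs: "vs = v # rest" by (cases vs) auto
  have "v \<notin> fspan (set rest)"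
    using Suc.prems FV.dim_set_Cons_eq_length vs by blast
  then have "v \<noteq> 0" using FV.span_zero by auto
  then obtain p where p: "v p \<noteq> 0" by (auto simp: fun_eq_iff)
  \<comment> \<open>Clearing the \<open>p\<close>-th coordinate of the other vectors changes neither their span with \<open>v\<close>
    nor the wedge product, and afterwards only the term \<open>i = p\<close> of the leading \<open>vec1 v\<close> survives.\<close>
  define rest' where "rest' = map (\<lambda>r. r - fscale (r p / v p) v) rest"
  have "fdim (set (v # rest')) = fdim (set (v # rest))"
    unfolding rest'_def by (intro FV.span_eq_dim) (simp add: FV.span_insert_shear)
  then have "fdim (set rest') = length rest'"
    using Suc.prems vs FV.dim_set_Cons_eq_length[of v rest'] by (simp add: rest'_def)
  moreover have "length rest' = n" using Suc.hyps(2) vs by (simp add: rest'_def)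
  ultimately have "wedge_list rest' \<noteq> (0 :: nat set \<Rightarrow> 'a)" using Suc.hyps(1) by blast
  then obtain K where K: "wedge_list rest' K \<noteq> (0 :: 'a)" by (auto simp: fun_eq_iff)
  have vanish: "\<forall>r\<in>set rest'. \<forall>i. i \<notin> - {p} \<longrightarrow> r i = 0"
    using p by (auto simp: rest'_def fscale_apply)
  have "finite K" "p \<notin> K" using wedge_list_support[OF vanish K] by auto
  have "wedge_list vs (insert p K) = wedge (vec1 v) (wedge_list rest') (insert p K)"
    using wedge_vec1_wedge_list_shear[of v "\<lambda>r. r p / v p" rest]
    by (simp add: vs wedge_list_Cons rest'_def)
  also have "\<dots> = wedge_sign (insert p K) p * v p * wedge_list rest' K"
    using wedge_list_support[OF vanish] \<open>finite K\<close> \<open>p \<notin> K\<close>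
    by (intro wedge_vec1_apply_insert) auto
  also have "\<dots> \<noteq> 0" using K p wedge_sign_nonzero by simp
  finally show ?case by auto
qed

section \<open>The Grassmann code as a code of linear forms\<close>

definition ext_index :: "nat \<Rightarrow> nat \<Rightarrow> nat set set" where
  "ext_index l m = {I. I \<subseteq> {0..<m} \<and> card I = l}"

lemma Ext_eq_coord_space: "Ext l m = coord_space (ext_index l m)"
  by (auto simp: Ext_def coord_space_def ext_index_def)

lemma Vsp_eq_coord_space: "Vsp m = coord_space {0..<m}"
  by (auto simp: Vsp_def coord_space_def)

lemma finite_ext_index: "finite (ext_index l m)"
  by (rule finite_subset[of _ "Pow {0..<m}"]) (auto simp: ext_index_def)

lemma card_ext_index: "card (ext_index l m) = m choose l"
  using n_subsets[of "{0..<m}" l] by (simp add: ext_index_def)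

lemma finite_Grass: "finite (Grass l m :: (nat \<Rightarrow> 'a::{field,finite}) set set)"
proof (rule finite_subset)
  show "Grass l m \<subseteq> Pow (Vsp m :: (nat \<Rightarrow> 'a) set)" by (auto simp: Grass_def)
qed (simp add: Vsp_eq_coord_space finite_coord_space)

lemma is_repE:
  assumes "is_rep l m rep" "W \<in> Grass l m"
  obtains vs where "length vs = l" "fdim (set vs) = l" "fspan (set vs) = W"
    "set vs \<subseteq> W" "rep W = wedge_list vs"
proof -
  obtain vs where vs: "length vs = l" "distinct vs" "findependent (set vs)"
    "fspan (set vs) = W" "rep W = wedge_list vs"
    using assms unfolding is_rep_def by blast
  moreover have "fdim (set vs) = l"
    using FV.dim_eq_card_independent[OF vs(3)] distinct_card[OF vs(2)] vs(1) by simp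
  moreover have "set vs \<subseteq> W" using vs(4) FV.span_superset by blast
  ultimately show ?thesis using that by blast
qed

lemma rep_in_Ext:
  assumes "is_rep l m rep" "W \<in> Grass l m"
  shows "rep W \<in> Ext l m"
proof -
  obtain vs where vs: "length vs = l" "fdim (set vs) = l" "fspan (set vs) = W"
    "set vs \<subseteq> W" "rep W = wedge_list vs"
    by (rule is_repE[OF assms])
  have "\<forall>v\<in>set vs. \<forall>i. i \<notin> {0..<m} \<longrightarrow> v i = 0"
    using vs(4) assms(2) by (auto simp: Grass_def Vsp_def)
  then have "I \<subseteq> {0..<m} \<and> card I = l" if "rep W I \<noteq> 0" for I
    using wedge_list_support[of vs "{0..<m}" I] that vs(1,5) by simp
  then show ?thesis by (simp add: Ext_def)
qed

lemma annihilator_rep: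
  assumes "is_rep l m rep" "W \<in> Grass l m"
  shows "{u. wedge (vec1 u) (rep W) = 0} = W"
proof -
  obtain vs where vs: "length vs = l" "fdim (set vs) = l" "fspan (set vs) = W"
    "set vs \<subseteq> W" "rep W = wedge_list vs"
    by (rule is_repE[OF assms])
  have "u \<in> W" if "wedge (vec1 u) (rep W) = 0" for u
  proof (rule ccontr)
    assume "u \<notin> W"
    then have "fdim (set (u # vs)) = length (u # vs)"
      using FV.dim_set_Cons_eq_length[of u vs] vs(1-3) by simp
    then have "wedge_list (u # vs) \<noteq> 0" by (rule wedge_list_nonzero)
    then show False using that vs(5) by (simp add: wedge_list_Cons)
  qed
  moreover have "wedge (vec1 u) (rep W) = 0" if "u \<in> W" for u
    using wedge_vec1_wedge_list_span[of u vs] that vs(3,5) by simp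
  ultimately show ?thesis by blast
qed

lemma inj_on_rep:
  assumes "is_rep l m rep"
  shows "inj_on rep (Grass l m)"
proof (rule inj_onI)
  fix W W' assume W: "W \<in> Grass l m" "W' \<in> Grass l m" "rep W = rep W'"
  have "W = {u. wedge (vec1 u) (rep W) = 0}" using annihilator_rep[OF assms W(1)] by simp
  also have "\<dots> = W'" using annihilator_rep[OF assms W(2)] W(3) by simp
  finally show "W = W'" .
qed

lemma wedge_list_coord_subspace:
  assumes I: "finite I" and vanish: "\<forall>v\<in>set vs. \<forall>i. i \<notin> I \<longrightarrow> v i = 0"
    and len: "length vs = card I" and dim: "fdim (set vs) = length vs"
  shows "wedge_list vs I \<noteq> (0::'a::field)"
    and "wedge_list vs = fscale (wedge_list vs I) (unit_vec I :: nat set \<Rightarrow> 'a)"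
proof -
  have other: "wedge_list vs K = (0::'a)" if "K \<noteq> I" for K
  proof (rule ccontr)
    assume "wedge_list vs K \<noteq> 0"
    then have "K \<subseteq> I" "card K = card I" using wedge_list_support[OF vanish] len by auto
    then show False using card_subset_eq[OF I] that by simp
  qed
  show "wedge_list vs I \<noteq> (0::'a)"
  proof
    assume "wedge_list vs I = 0"
    have "wedge_list vs = (0 :: nat set \<Rightarrow> 'a)"
    proof
      fix K
      show "wedge_list vs K = 0 K"
        using other \<open>wedge_list vs I = 0\<close> by (cases "K = I") simp_all
    qed
    then show False using wedge_list_nonzero[OF dim] by simp
  qed
  show "wedge_list vs = fscale (wedge_list vs I) (unit_vec I :: nat set \<Rightarrow> 'a)"
    using other by (auto simp: fun_eq_iff fscale_apply unit_vec_def)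
qed

lemma coord_space_subset_span_rep:
  fixes rep :: "(nat \<Rightarrow> 'a::{field,finite}) set \<Rightarrow> nat set \<Rightarrow> 'a"
  assumes rep: "is_rep l m rep"
  shows "coord_space (ext_index l m) \<subseteq> fspan (rep ` Grass l m)"
proof -
  have "unit_vec I \<in> fspan (rep ` Grass l m)" if I: "I \<in> ext_index l m" for I
  proof -
    have "I \<subseteq> {0..<m}" "card I = l" using I by (auto simp: ext_index_def)
    then have "finite I" using finite_subset[OF _ finite_atLeastLessThan] by blast
    define W where "W = (coord_space I :: (nat \<Rightarrow> 'a) set)"
    have "W \<subseteq> Vsp m"
      using \<open>I \<subseteq> {0..<m}\<close> by (auto simp: W_def coord_space_def Vsp_def)
    then have W: "W \<in> Grass l m"
      using \<open>card I = l\<close> dim_coord_space[OF \<open>finite I\<close>, where 'a='a]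
        subspace_coord_space[where 'a='a]
      by (simp add: Grass_def W_def)
    obtain vs where vs: "length vs = l" "fdim (set vs) = l" "fspan (set vs) = W"
      "set vs \<subseteq> W" "rep W = wedge_list vs"
      by (rule is_repE[OF rep W])
    have vanish: "\<forall>v\<in>set vs. \<forall>i. i \<notin> I \<longrightarrow> v i = 0"
      using vs(4) by (auto simp: W_def coord_space_def)
    have "length vs = card I" "fdim (set vs) = length vs"
      using vs(1,2) \<open>card I = l\<close> by simp_all
    note coeff = wedge_list_coord_subspace[OF \<open>finite I\<close> vanish this]
    define c where "c = rep W I"
    have "rep W = fscale c (unit_vec I)" "c \<noteq> 0"
      using coeff by (simp_all add: c_def vs(5))
    then have "unit_vec I = fscale (1 / c) (rep W)" by (simp add: fscale_def fun_eq_iff)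
    moreover have "rep W \<in> fspan (rep ` Grass l m)" using W by (intro FV.span_base) simp
    ultimately show ?thesis by (simp add: FV.span_scale)
  qed
  then have "fspan (unit_vec ` ext_index l m) \<subseteq> fspan (rep ` Grass l m)"
    by (intro FV.span_minimal) auto
  then show ?thesis by (simp add: coord_space_eq_span_unit_vecs[OF finite_ext_index])
qed

definition hodge_sign :: "nat \<Rightarrow> nat set \<Rightarrow> 'a::field" where
  "hodge_sign m I = (-1) ^ card {(i, j). i \<in> I \<and> j \<in> {0..<m} - I \<and> j < i}"

definition hodge :: "nat \<Rightarrow> (nat set \<Rightarrow> 'a::field) \<Rightarrow> nat set \<Rightarrow> 'a" where
  "hodge m \<omega> = (\<lambda>I. hodge_sign m I * \<omega> ({0..<m} - I))"

lemma hodge_sign_square: "hodge_sign m I * hodge_sign m I = (1::'a::field)"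
  by (simp add: hodge_sign_def power_mult_distrib[symmetric])

lemma top_coeff_wedge:
  assumes "\<alpha> \<in> Ext l m"
  shows "top_coeff m (wedge \<alpha> \<omega>) = dot (ext_index l m) \<alpha> (hodge m \<omega>)"
proof -
  have "top_coeff m (wedge \<alpha> \<omega>) = (\<Sum>I\<in>Pow {0..<m}. hodge_sign m I * \<alpha> I * \<omega> ({0..<m} - I))"
    by (simp add: top_coeff_def wedge_def hodge_sign_def)
  also have "\<dots> = (\<Sum>I\<in>ext_index l m. hodge_sign m I * \<alpha> I * \<omega> ({0..<m} - I))"
    using assms by (intro sum.mono_neutral_right) (auto simp: Ext_def ext_index_def)
  also have "\<dots> = dot (ext_index l m) \<alpha> (hodge m \<omega>)"
    by (simp add: dot_def hodge_def algebra_simps)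
  finally show ?thesis .
qed

lemma hodge_onto_coord_space:
  assumes "u \<in> coord_space (ext_index l m)"
  obtains \<omega> where "\<omega> \<in> Ext (m - l) m" "\<And>I. I \<in> ext_index l m \<Longrightarrow> hodge m \<omega> I = u I"
proof
  define \<omega> where "\<omega> = (\<lambda>J. if J \<subseteq> {0..<m} \<and> card J = m - l
      then hodge_sign m ({0..<m} - J) * u ({0..<m} - J) else (0::'a))"
  show "\<omega> \<in> Ext (m - l) m" by (auto simp: Ext_def \<omega>_def split: if_splits)
  fix I assume "I \<in> ext_index l m"
  then have "I \<subseteq> {0..<m}" "card I = l" by (auto simp: ext_index_def)
  then have "card ({0..<m} - I) = m - l" "{0..<m} - ({0..<m} - I) = I"
    by (simp_all add: card_Diff_subset[OF finite_subset[OF _ finite_atLeastLessThan]] Diff_Diff_Int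
        Int_absorb1)
  then show "hodge m \<omega> I = u I"
    by (simp add: hodge_def \<omega>_def mult.assoc[symmetric] hodge_sign_square)
qed

lemma eval_map_cong: "(\<And>I. I \<in> X \<Longrightarrow> u I = u' I) \<Longrightarrow> eval_map X G r u = eval_map X G r u'"
  by (auto simp: eval_map_def dot_def fun_eq_iff intro!: sum.cong)

lemma grassmann_code_eq_eval_code:
  assumes rep: "is_rep l m rep"
  shows "grassmann_code l m rep
    = eval_map (ext_index l m) (Grass l m) rep ` coord_space (ext_index l m)"
proof -
  let ?e = "eval_map (ext_index l m) (Grass l m) rep"
  let ?trunc = "\<lambda>v I. if I \<in> ext_index l m then v I else 0"
  have tau: "tau l m rep \<omega> = ?e (?trunc (hodge m \<omega>))" for \<omega>
  proof -
    have "tau l m rep \<omega> = ?e (hodge m \<omega>)"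
      using top_coeff_wedge[OF rep_in_Ext[OF rep]] by (auto simp: tau_def eval_map_def)
    also have "\<dots> = ?e (?trunc (hodge m \<omega>))" by (rule eval_map_cong) simp
    finally show ?thesis .
  qed
  show ?thesis
  proof (intro equalityI subsetI)
    fix y assume "y \<in> grassmann_code l m rep"
    then obtain \<omega> where "y = tau l m rep \<omega>" by (auto simp: grassmann_code_def)
    moreover have "?trunc (hodge m \<omega>) \<in> coord_space (ext_index l m)"
      by (simp add: coord_space_def)
    ultimately show "y \<in> ?e ` coord_space (ext_index l m)" using tau by blast
  next
    fix y assume "y \<in> ?e ` coord_space (ext_index l m)"
    then obtain u where u: "u \<in> coord_space (ext_index l m)" "y = ?e u" by blast
    obtain \<omega> where \<omega>: "\<omega> \<in> Ext (m - l) m" "\<And>I. I \<in> ext_index l m \<Longrightarrow> hodge m \<omega> I = u I"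
      using hodge_onto_coord_space[OF u(1)] by blast
    have "y = tau l m rep \<omega>"
      using u(2) tau[of \<omega>] \<omega>(2) by (auto intro: eval_map_cong)
    then show "y \<in> grassmann_code l m rep" using \<omega>(1) by (simp add: grassmann_code_def)
  qed
qed

theorem corollary5p2:
  fixes l m s :: nat
    and rep :: "(nat \<Rightarrow> 'a::{field,finite}) set \<Rightarrow> (nat set \<Rightarrow> 'a)"
  assumes "1 \<le> l" and "l \<le> m"
    and "is_rep l m rep"
    and "1 \<le> s" and "s \<le> m choose l"
  shows "ghw (Grass l m) (grassmann_code l m rep) s
           = card (Grass l m :: (nat \<Rightarrow> 'a) set set) - g_s l m rep s"
proof -
  have "rep ` Grass l m \<subseteq> coord_space (ext_index l m)"
    using rep_in_Ext[OF assms(3)] Ext_eq_coord_space by blast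
  then have "ghw (Grass l m) (grassmann_code l m rep) s
      = card (Grass l m :: (nat \<Rightarrow> 'a) set set) - Max {card (E \<inter> rep ` Grass l m) | E.
          E \<subseteq> coord_space (ext_index l m) \<and> fsubspace E
          \<and> fdim (coord_space (ext_index l m) :: (nat set \<Rightarrow> 'a) set) - fdim E = s}"
    unfolding grassmann_code_eq_eval_code[OF assms(3)]
    using assms(5) finite_ext_index finite_Grass inj_on_rep[OF assms(3)]
      coord_space_subset_span_rep[OF assms(3)]
    by (intro ghw_eval_code) (simp_all add: card_ext_index)
  then show ?thesis
    by (simp add: g_s_def gE_def Tset_def Ext_eq_coord_space)
qed

end
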